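(* Let $A$ be a simple type. For every partial surjection $f \colon Q \twoheadrightarrow Q'$ between finite sets one has $\mathrm{Reg}_{Q'}(A) \subseteq \mathrm{Reg}_{Q}(A)$. The resulting diagram of Boolean algebras $\mathrm{Reg}_{(-)}(A) \colon \mathbf{FinPSurj}^{\mathrm{op}} \to \mathbf{BA}$, sending $Q$ to $\mathrm{Reg}_Q(A)$ and a partial surjection $f \colon Q \twoheadrightarrow Q'$ to the inclusion $\mathrm{Reg}_{Q'}(A) \hookrightarrow \mathrm{Reg}_Q(A)$, is directed, and its colimit in the category $\mathbf{BA}$ of Boolean algebras is the Boolean algebra $\mathrm{Reg}(A)$ (in particular $\mathrm{Reg}(A)$ is a Boolean subalgebra of $\wp(\Lambda(A))$).
   Context: Simple types are generated from a base type $o$ by $A \Rightarrow B$. $\Lambda(A)$ denotes the set of closed simply typed $\lambda$-terms of type $A$ modulo $\beta\eta$-conversion. For a finite set $Q$, define $[\![o]\!]_Q = Q$ and $[\![A \Rightarrow B]\!]_Q$ = the set of all functions $[\![A]\!]_Q \to [\![B]\!]_Q$; each $M \in \Lambda(A)$ has its standard interpretation $[\![M]\!]_Q \in [\![A]\!]_Q$ in this finite set-theoretic model. $\mathrm{Reg}_Q(A) = \{\{M \in \Lambda(A) : [\![M]\!]_Q \in F\} : F \subseteq [\![A]\!]_Q\}$ (a Boolean subalgebra of $\wp(\Lambda(A))$), and $\mathrm{Reg}(A) = \bigcup_{Q \text{ finite}} \mathrm{Reg}_Q(A)$. A partial surjection $f \colon Q \twoheadrightarrow Q'$ is a relation $f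 \subseteq Q \times Q'$ that is the graph of a partial function which is surjective onto $Q'$. $\mathbf{FinPSurj}$ is the category of finite sets and partial surjections. *)

theory Defs
  imports Main "HOL-Library.FSet"
begin

datatype ty = Bo | Arr ty ty

datatype tm = Var nat | App tm tm | Lam ty tm

inductive has_ty :: "ty list \<Rightarrow> tm \<Rightarrow> ty \<Rightarrow> bool" where
  has_ty_Var: "i < length G \<Longrightarrow> has_ty G (Var i) (G ! i)"
| has_ty_App: "has_ty G s (Arr T U) \<Longrightarrow> has_ty G t T \<Longrightarrow> has_ty G (App s t) U"
| has_ty_Lam: "has_ty (T # G) t U \<Longrightarrow> has_ty G (Lam T t) (Arr T U)"

primrec lift :: "nat \<Rightarrow> tm \<Rightarrow> tm" where
  "lift k (Var i) = (if i < k then Var i else Var (Suc i))"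
| "lift k (App s t) = App (lift k s) (lift k t)"
| "lift k (Lam T t) = Lam T (lift (Suc k) t)"

primrec subst :: "tm \<Rightarrow> nat \<Rightarrow> tm \<Rightarrow> tm" where
  "subst (Var i) k u = (if i < k then Var i else if i = k then u else Var (i - 1))"
| "subst (App s t) k u = App (subst s k u) (subst t k u)"
| "subst (Lam T t) k u = Lam T (subst t (Suc k) (lift 0 u))"

inductive step :: "tm \<Rightarrow> tm \<Rightarrow> bool" where
  beta: "step (App (Lam T s) t) (subst s 0 t)"
| eta: "step (Lam T (App (lift 0 t) (Var 0))) t"
| appL: "step s s' \<Longrightarrow> step (App s t) (App s' t)"
| appR: "step t t' \<Longrightarrow> step (App s t) (App s t')"
| lam: "step t t' \<Longrightarrow> step (Lam T t) (Lam T t')"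

definition LamRaw :: "ty \<Rightarrow> tm set" where
  "LamRaw A = {t. has_ty [] t A}"

definition stepA :: "ty \<Rightarrow> (tm \<times> tm) set" where
  "stepA A = {(s, t). s \<in> LamRaw A \<and> t \<in> LamRaw A \<and> step s t}"

definition conv :: "ty \<Rightarrow> (tm \<times> tm) set" where
  "conv A = (stepA A \<union> (stepA A)\<inverse>)\<^sup>* \<inter> (LamRaw A \<times> LamRaw A)"

text \<open>\<Lambda>(A): closed terms of type A modulo beta-eta conversion.\<close>
definition Terms :: "ty \<Rightarrow> tm set set" where
  "Terms A = LamRaw A // conv A"

datatype 'q sv = Base 'q | Fn "('q sv \<times> 'q sv) fset"

primrec dom :: "'q set \<Rightarrow> ty \<Rightarrow> 'q sv set" where
  "dom Q Bo = Base ` Q"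
| "dom Q (Arr A B) = {Fn G | G. fset G \<subseteq> dom Q A \<times> dom Q B \<and>
                                  (\<forall>x \<in> dom Q A. \<exists>!y. (x, y) |\<in>| G)}"

fun app :: "'q sv \<Rightarrow> 'q sv \<Rightarrow> 'q sv" where
  "app (Fn G) x = (THE y. (x, y) |\<in>| G)"
| "app (Base q) x = undefined"

primrec sem :: "'q set \<Rightarrow> tm \<Rightarrow> 'q sv list \<Rightarrow> 'q sv" where
  "sem Q (Var i) e = e ! i"
| "sem Q (App s t) e = app (sem Q s e) (sem Q t e)"
| "sem Q (Lam T t) e = Fn (Abs_fset ((\<lambda>x. (x, sem Q t (x # e))) ` dom Q T))"

definition interp :: "'q set \<Rightarrow> tm set \<Rightarrow> 'q sv" where
  "interp Q C = sem Q (SOME t. t \<in> C) []"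

definition RegQ :: "'q set \<Rightarrow> ty \<Rightarrow> tm set set set" where
  "RegQ Q A = {{C \<in> Terms A. interp Q C \<in> F} | F. F \<subseteq> dom Q A}"

text \<open>Reg(A): union over all finite Q (finite sets represented as finite sets of naturals).\<close>
definition Reg :: "ty \<Rightarrow> tm set set set" where
  "Reg A = \<Union> {RegQ (Q :: nat set) A | Q. finite Q}"

definition psurj :: "'a set \<Rightarrow> 'b set \<Rightarrow> ('a \<times> 'b) set \<Rightarrow> bool" where
  "psurj Q Q' f \<longleftrightarrow> f \<subseteq> Q \<times> Q' \<and> single_valued f \<and> Range f = Q'"

definition bool_subalg :: "'x set \<Rightarrow> 'x set set \<Rightarrow> bool" where
  "bool_subalg U S \<longleftrightarrow> S \<subseteq> Pow U \<and> {} \<in> S \<and> (\<forall>X \<in> S. U - X \<in> S)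
      \<and> (\<forall>X \<in> S. \<forall>Y \<in> S. X \<union> Y \<in> S)"

definition ba_hom_on :: "'x set \<Rightarrow> 'x set set \<Rightarrow> ('x set \<Rightarrow> 'c::boolean_algebra) \<Rightarrow> bool" where
  "ba_hom_on U S h \<longleftrightarrow> h {} = bot \<and> h U = top \<and> (\<forall>X \<in> S. h (U - X) = - h X)
      \<and> (\<forall>X \<in> S. \<forall>Y \<in> S. h (X \<union> Y) = sup (h X) (h Y) \<and> h (X \<inter> Y) = inf (h X) (h Y))"

end

theory Submission
  imports Defs
begin

text \<open>A partial surjection \<open>f : Q \<twoheadrightarrow> Q'\<close> lifts, by the usual logical-relation construction,
  to a relation \<open>R\<^sub>A\<close> between \<open>[[A]]\<^sub>Q\<close> and \<open>[[A]]\<^sub>Q'\<close> at every type, and \<open>R\<^sub>A\<close> is again a partial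
  surjection: at arrow types a preimage of \<open>\<psi>\<close> is assembled pointwise from preimages of the values
  of \<open>\<psi>\<close>. By the fundamental lemma every closed term of type \<open>A\<close> has related interpretations,
  so a language recognised by \<open>F' \<subseteq> [[A]]\<^sub>Q'\<close> is recognised by \<open>R\<^sub>A\<inverse>(F') \<subseteq> [[A]]\<^sub>Q\<close>.
  Any two finite sets are covered by their union, so the \<open>Reg\<^sub>Q(A)\<close> form a directed family of
  Boolean subalgebras; its union \<open>Reg(A)\<close> is a Boolean subalgebra and, since any two of its elements
  lie in a common \<open>Reg\<^sub>Q(A)\<close>, compatible homomorphisms glue uniquely to it.\<close>

lemma psurj_memD: "psurj Q Q' f \<Longrightarrow> (x, y) \<in> f \<Longrightarrow> x \<in> Q \<and> y \<in> Q'"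
  by (auto simp: psurj_def)

lemma psurj_single_valued: "psurj Q Q' f \<Longrightarrow> single_valued f"
  by (simp add: psurj_def)

lemma psurj_surjE:
  assumes "psurj Q Q' f" "y \<in> Q'"
  obtains x where "(x, y) \<in> f"
  using assms by (auto simp: psurj_def)

lemma psurj_empty: "psurj Q Q' f \<Longrightarrow> Q = {} \<Longrightarrow> Q' = {}"
  by (auto simp: psurj_def)

lemma psurj_directed:
  fixes Q1 Q2 :: "'q set"
  assumes "finite Q1" "finite Q2"
  shows "\<exists>Q :: 'q set. finite Q \<and> (\<exists>f. psurj Q Q1 f) \<and> (\<exists>f. psurj Q Q2 f)"
proof (intro exI conjI)
  show "finite (Q1 \<union> Q2)"
    using assms by simp
  show "psurj (Q1 \<union> Q2) Q1 (Id_on Q1)" "psurj (Q1 \<union> Q2) Q2 (Id_on Q2)"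
    by (auto simp: psurj_def)
qed

section \<open>Directed unions of Boolean subalgebras\<close>

lemma bool_subalg_top: "bool_subalg U S \<Longrightarrow> U \<in> S"
  unfolding bool_subalg_def by (metis Diff_empty)

lemma bool_subalg_Int:
  assumes S: "bool_subalg U S" and "X \<in> S" "Y \<in> S"
  shows "X \<inter> Y \<in> S"
proof -
  have "U - X \<in> S" "U - Y \<in> S" "X \<subseteq> U" "Y \<subseteq> U"
    using assms unfolding bool_subalg_def by blast+
  then have "U - ((U - X) \<union> (U - Y)) \<in> S"
    using S unfolding bool_subalg_def by blast
  moreover have "U - ((U - X) \<union> (U - Y)) = X \<inter> Y"
    using \<open>X \<subseteq> U\<close> \<open>Y \<subseteq> U\<close> by blast
  ultimately show ?thesis
    by simp
qed

locale directed_bool_subalgs =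
  fixes U :: "'x set" and I :: "'i set" and le :: "'i \<Rightarrow> 'i \<Rightarrow> bool"
    and S :: "'i \<Rightarrow> 'x set set"
  assumes index_nonempty: "I \<noteq> {}"
    and subalg: "i \<in> I \<Longrightarrow> bool_subalg U (S i)"
    and subalg_mono: "i \<in> I \<Longrightarrow> j \<in> I \<Longrightarrow> le i j \<Longrightarrow> S i \<subseteq> S j"
    and directed: "i \<in> I \<Longrightarrow> j \<in> I \<Longrightarrow> \<exists>k \<in> I. le i k \<and> le j k"
begin

lemma common_subalg:
  assumes "X \<in> (\<Union>i \<in> I. S i)" "Y \<in> (\<Union>i \<in> I. S i)"
  obtains k where "k \<in> I" "X \<in> S k" "Y \<in> S k"
proof -
  obtain i j where "i \<in> I" "X \<in> S i" "j \<in> I" "Y \<in> S j"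
    using assms by blast
  moreover obtain k where "k \<in> I" "le i k" "le j k"
    using directed[OF \<open>i \<in> I\<close> \<open>j \<in> I\<close>] by blast
  ultimately show thesis
    using that subalg_mono by blast
qed

lemma bool_subalg_UN: "bool_subalg U (\<Union>i \<in> I. S i)"
  unfolding bool_subalg_def
proof (intro conjI ballI)
  show "(\<Union>i \<in> I. S i) \<subseteq> Pow U"
    using subalg unfolding bool_subalg_def by blast
  show "{} \<in> (\<Union>i \<in> I. S i)"
    using index_nonempty subalg unfolding bool_subalg_def by blast
next
  fix X assume "X \<in> (\<Union>i \<in> I. S i)"
  then show "U - X \<in> (\<Union>i \<in> I. S i)"
    using subalg unfolding bool_subalg_def by blast
next
  fix X Y assume "X \<in> (\<Union>i \<in> I. S i)" "Y \<in> (\<Union>i \<in> I. S i)"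
  then obtain k where "k \<in> I" "X \<in> S k" "Y \<in> S k"
    by (rule common_subalg)
  then show "X \<union> Y \<in> (\<Union>i \<in> I. S i)"
    using subalg[of k] unfolding bool_subalg_def by blast
qed

end

locale bool_subalg_cocone = directed_bool_subalgs +
  fixes g :: "'i \<Rightarrow> 'x set \<Rightarrow> 'c::boolean_algebra"
  assumes hom: "i \<in> I \<Longrightarrow> ba_hom_on U (S i) (g i)"
    and compat: "i \<in> I \<Longrightarrow> j \<in> I \<Longrightarrow> le i j \<Longrightarrow> X \<in> S i \<Longrightarrow> g j X = g i X"
begin

definition glue :: "'x set \<Rightarrow> 'c" where
  "glue X = g (SOME i. i \<in> I \<and> X \<in> S i) X"

lemma glue_eq:
  assumes i: "i \<in> I" and X: "X \<in> S i"
  shows "glue X = g i X"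
proof -
  let ?j = "SOME i. i \<in> I \<and> X \<in> S i"
  have j: "?j \<in> I" "X \<in> S ?j"
    using someI[of "\<lambda>i. i \<in> I \<and> X \<in> S i"] i X by blast+
  obtain k where "k \<in> I" "le i k" "le ?j k"
    using directed[OF i j(1)] by blast
  then have "g k X = g i X" "g k X = g ?j X"
    using compat i X j by blast+
  then show ?thesis
    unfolding glue_def by simp
qed

lemma ba_hom_on_glue: "ba_hom_on U (\<Union>i \<in> I. S i) glue"
  unfolding ba_hom_on_def
proof (intro conjI ballI)
  obtain i0 where i0: "i0 \<in> I"
    using index_nonempty by blast
  show "glue {} = bot" "glue U = top"
    using glue_eq[OF i0] hom[OF i0] subalg[OF i0] bool_subalg_top[OF subalg[OF i0]]
    unfolding bool_subalg_def ba_hom_on_def by auto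
next
  fix X assume "X \<in> (\<Union>i \<in> I. S i)"
  then obtain i where i: "i \<in> I" "X \<in> S i"
    by blast
  then have "U - X \<in> S i"
    using subalg unfolding bool_subalg_def by blast
  then show "glue (U - X) = - glue X"
    using glue_eq i hom[OF i(1)] unfolding ba_hom_on_def by simp
next
  fix X Y assume "X \<in> (\<Union>i \<in> I. S i)" "Y \<in> (\<Union>i \<in> I. S i)"
  then obtain k where k: "k \<in> I" "X \<in> S k" "Y \<in> S k"
    by (rule common_subalg)
  then have "X \<union> Y \<in> S k" "X \<inter> Y \<in> S k"
    using subalg[OF k(1)] bool_subalg_Int[OF subalg[OF k(1)]] unfolding bool_subalg_def by blast+
  then show "glue (X \<union> Y) = sup (glue X) (glue Y)" "glue (X \<inter> Y) = inf (glue X) (glue Y)"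
    using glue_eq k hom[OF k(1)] unfolding ba_hom_on_def by simp_all
qed

end

section \<open>Function spaces of the finite model\<close>

definition graph_fn :: "'q set \<Rightarrow> ty \<Rightarrow> ('q sv \<Rightarrow> 'q sv) \<Rightarrow> 'q sv" where
  "graph_fn Q A g = Fn (Abs_fset ((\<lambda>x. (x, g x)) ` dom Q A))"

lemma sem_Lam: "sem Q (Lam T t) e = graph_fn Q T (\<lambda>x. sem Q t (x # e))"
  by (simp add: graph_fn_def)

lemma finite_dom: "finite Q \<Longrightarrow> finite (dom Q A)"
proof (induction A)
  case Bo
  then show ?case by simp
next
  case (Arr A B)
  have "dom Q (Arr A B) \<subseteq> (Fn \<circ> Abs_fset) ` Pow (dom Q A \<times> dom Q B)"
  proof
    fix \<phi> assume "\<phi> \<in> dom Q (Arr A B)"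
    then obtain G where "\<phi> = Fn G" "fset G \<subseteq> dom Q A \<times> dom Q B"
      by auto
    then show "\<phi> \<in> (Fn \<circ> Abs_fset) ` Pow (dom Q A \<times> dom Q B)"
      by (auto intro!: image_eqI[where x = "fset G"] simp: fset_inverse)
  qed
  moreover have "finite ((Fn \<circ> Abs_fset) ` Pow (dom Q A \<times> dom Q B))"
    using Arr by simp
  ultimately show ?case
    by (rule finite_subset)
qed

lemma fset_graph_fn:
  "finite Q \<Longrightarrow> fset (Abs_fset ((\<lambda>x. (x, g x)) ` dom Q A)) = (\<lambda>x. (x, g x)) ` dom Q A"
  by (simp add: Abs_fset_inverse finite_dom)

lemma graph_fn_in_dom:
  assumes "finite Q" "\<And>x. x \<in> dom Q A \<Longrightarrow> g x \<in> dom Q B"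
  shows "graph_fn Q A g \<in> dom Q (Arr A B)"
  using assms by (auto simp: graph_fn_def fset_graph_fn)

lemma app_graph_fn: "finite Q \<Longrightarrow> x \<in> dom Q A \<Longrightarrow> app (graph_fn Q A g) x = g x"
  by (auto simp: graph_fn_def fset_graph_fn)

lemma app_Fn_iff:
  assumes "Fn G \<in> dom Q (Arr A B)" "x \<in> dom Q A"
  shows "(x, y) |\<in>| G \<longleftrightarrow> y = app (Fn G) x"
proof -
  have unique: "\<exists>!y. (x, y) |\<in>| G"
    using assms by simp
  show ?thesis
  proof
    assume "(x, y) |\<in>| G"
    then show "y = app (Fn G) x"
      by (simp add: the1_equality[OF unique])
  next
    assume "y = app (Fn G) x"
    then show "(x, y) |\<in>| G"
      using theI'[OF unique] by simp
  qed
qed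

lemma app_in_dom:
  assumes \<phi>: "\<phi> \<in> dom Q (Arr A B)" and x: "x \<in> dom Q A"
  shows "app \<phi> x \<in> dom Q B"
proof -
  obtain G where G: "\<phi> = Fn G" "fset G \<subseteq> dom Q A \<times> dom Q B"
    using \<phi> by auto
  have "(x, app \<phi> x) |\<in>| G"
    using app_Fn_iff[OF \<phi>[unfolded G(1)] x] G(1) by blast
  then show ?thesis
    using G(2) by auto
qed

lemma dom_Arr_ext:
  assumes \<phi>: "\<phi> \<in> dom Q (Arr A B)" and \<psi>: "\<psi> \<in> dom Q (Arr A B)"
    and app_eq: "\<And>x. x \<in> dom Q A \<Longrightarrow> app \<phi> x = app \<psi> x"
  shows "\<phi> = \<psi>"
proof -
  obtain G H where GH: "\<phi> = Fn G" "\<psi> = Fn H"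
    and graphs: "fset G \<subseteq> dom Q A \<times> dom Q B" "fset H \<subseteq> dom Q A \<times> dom Q B"
    using \<phi> \<psi> by auto
  have "(x, y) |\<in>| G \<longleftrightarrow> (x, y) |\<in>| H" for x y
  proof (cases "x \<in> dom Q A")
    case True
    have "(x, y) |\<in>| G \<longleftrightarrow> y = app \<phi> x" "(x, y) |\<in>| H \<longleftrightarrow> y = app \<psi> x"
      using app_Fn_iff[OF \<phi>[unfolded GH(1)] True] app_Fn_iff[OF \<psi>[unfolded GH(2)] True] GH
      by blast+
    then show ?thesis
      using app_eq[OF True] by simp
  next
    case False
    then show ?thesis
      using graphs by auto
  qed
  then show ?thesis
    using GH by (auto intro: fset_eqI)
qed

text \<open>Unfolding membership in \<open>dom Q (Arr A B)\<close> makes the automation diverge; from now on the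
  function spaces are used only through the lemmas above.\<close>
declare dom.simps(2) [simp del]

text \<open>\<open>ty_false A\<close>: \<open>A\<close> is false when read as a propositional formula with \<open>o\<close> as falsity,
  that is, \<open>A\<close> is uninhabited in the model over the empty set.\<close>
fun ty_false :: "ty \<Rightarrow> bool" where
  "ty_false Bo = True"
| "ty_false (Arr A B) = (\<not> ty_false A \<and> ty_false B)"

lemma dom_Arr_eq_empty_iff:
  assumes "finite Q"
  shows "dom Q (Arr A B) = {} \<longleftrightarrow> dom Q A \<noteq> {} \<and> dom Q B = {}"
proof
  assume "dom Q (Arr A B) = {}"
  then have "\<not> (\<forall>x \<in> dom Q A. (SOME y. y \<in> dom Q B) \<in> dom Q B)"
    using graph_fn_in_dom[OF assms, of A "\<lambda>_. SOME y. y \<in> dom Q B" B] by blast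
  then show "dom Q A \<noteq> {} \<and> dom Q B = {}"
    by (auto intro: someI)
next
  assume "dom Q A \<noteq> {} \<and> dom Q B = {}"
  then show "dom Q (Arr A B) = {}"
    using app_in_dom by blast
qed

lemma dom_eq_empty_iff: "finite Q \<Longrightarrow> dom Q A = {} \<longleftrightarrow> Q = {} \<and> ty_false A"
proof (induction A)
  case Bo
  then show ?case by simp
next
  case (Arr A B)
  then show ?case
    by (simp only: dom_Arr_eq_empty_iff Arr.IH ty_false.simps) blast
qed

section \<open>The logical relation induced by a partial surjection\<close>

primrec logrel :: "('a \<times> 'b) set \<Rightarrow> 'a set \<Rightarrow> 'b set \<Rightarrow> ty \<Rightarrow> ('a sv \<times> 'b sv) set" where
  "logrel f Q Q' Bo = {(Base q, Base q') | q q'. (q, q') \<in> f}"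
| "logrel f Q Q' (Arr A B) = {(\<phi>, \<psi>). \<phi> \<in> dom Q (Arr A B) \<and> \<psi> \<in> dom Q' (Arr A B) \<and>
     (\<forall>x y. (x, y) \<in> logrel f Q Q' A \<longrightarrow> (app \<phi> x, app \<psi> y) \<in> logrel f Q Q' B)}"

lemma psurj_logrel_Bo:
  assumes "psurj Q Q' f"
  shows "psurj (dom Q Bo) (dom Q' Bo) (logrel f Q Q' Bo)"
proof -
  have f: "f \<subseteq> Q \<times> Q'" "single_valued f" "Range f = Q'"
    using assms by (simp_all add: psurj_def)
  have "logrel f Q Q' Bo \<subseteq> dom Q Bo \<times> dom Q' Bo"
    using f(1) by auto
  moreover have "single_valued (logrel f Q Q' Bo)"
    using f(2) by (auto simp: single_valued_def)
  moreover have "dom Q' Bo \<subseteq> Range (logrel f Q Q' Bo)"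
    using f(3) by auto
  ultimately show ?thesis
    unfolding psurj_def by blast
qed

lemma logrel_Arr_app:
  "(\<phi>, \<psi>) \<in> logrel f Q Q' (Arr A B) \<Longrightarrow> (x, y) \<in> logrel f Q Q' A
    \<Longrightarrow> (app \<phi> x, app \<psi> y) \<in> logrel f Q Q' B"
  by simp

lemma single_valued_logrel_Arr:
  assumes RA: "psurj (dom Q A) (dom Q' A) (logrel f Q Q' A)"
    and RB: "single_valued (logrel f Q Q' B)"
  shows "single_valued (logrel f Q Q' (Arr A B))"
proof (rule single_valuedI)
  fix \<phi> \<psi>1 \<psi>2
  assume 1: "(\<phi>, \<psi>1) \<in> logrel f Q Q' (Arr A B)" and 2: "(\<phi>, \<psi>2) \<in> logrel f Q Q' (Arr A B)"
  have "app \<psi>1 y = app \<psi>2 y" if y: "y \<in> dom Q' A" for y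
  proof -
    obtain x where x: "(x, y) \<in> logrel f Q Q' A"
      using RA y by (rule psurj_surjE)
    show ?thesis
      using RB logrel_Arr_app[OF 1 x] logrel_Arr_app[OF 2 x] by (rule single_valuedD)
  qed
  moreover have "\<psi>1 \<in> dom Q' (Arr A B)" "\<psi>2 \<in> dom Q' (Arr A B)"
    using 1 2 by simp_all
  ultimately show "\<psi>1 = \<psi>2"
    by (rule dom_Arr_ext[rotated 2])
qed

lemma logrel_Arr_surj:
  assumes fin: "finite Q" "finite Q'" and f: "psurj Q Q' f"
    and RA: "psurj (dom Q A) (dom Q' A) (logrel f Q Q' A)"
    and RB: "psurj (dom Q B) (dom Q' B) (logrel f Q Q' B)"
    and \<psi>: "\<psi> \<in> dom Q' (Arr A B)"
  shows "\<exists>\<phi>. (\<phi>, \<psi>) \<in> logrel f Q Q' (Arr A B)"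
proof -
  let ?RA = "logrel f Q Q' A" and ?RB = "logrel f Q Q' B"
  have "\<exists>z \<in> dom Q B. \<forall>y. (x, y) \<in> ?RA \<longrightarrow> (z, app \<psi> y) \<in> ?RB" if x: "x \<in> dom Q A" for x
  proof (cases "x \<in> Domain ?RA")
    case True
    then obtain y where y: "(x, y) \<in> ?RA"
      by blast
    have "app \<psi> y \<in> dom Q' B"
      using app_in_dom[OF \<psi>] psurj_memD[OF RA y] by blast
    then obtain z where z: "(z, app \<psi> y) \<in> ?RB"
      by (rule psurj_surjE[OF RB])
    have "(z, app \<psi> y') \<in> ?RB" if "(x, y') \<in> ?RA" for y'
      using single_valuedD[OF psurj_single_valued[OF RA] y that] z by simp
    then show ?thesis
      using psurj_memD[OF RB z] by blast
  next
    case False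
    \<comment> \<open>Any value will do, and there is one: \<open>Q = {}\<close> forces \<open>Q' = {}\<close>, and whether a domain
      is empty depends only on whether its base set is.\<close>
    have "\<not> (Q = {} \<and> ty_false A)" "\<not> (Q' = {} \<and> ty_false (Arr A B))"
      using x \<psi> dom_eq_empty_iff[OF fin(1)] dom_eq_empty_iff[OF fin(2)] by blast+
    then have "\<not> (Q = {} \<and> ty_false B)"
      using psurj_empty[OF f] by auto
    then have "dom Q B \<noteq> {}"
      using dom_eq_empty_iff[OF fin(1)] by blast
    then show ?thesis
      using False by blast
  qed
  then obtain g where g: "\<And>x. x \<in> dom Q A \<Longrightarrow>
      g x \<in> dom Q B \<and> (\<forall>y. (x, y) \<in> ?RA \<longrightarrow> (g x, app \<psi> y) \<in> ?RB)"
    by metis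
  have "(app (graph_fn Q A g) x, app \<psi> y) \<in> ?RB" if xy: "(x, y) \<in> ?RA" for x y
  proof -
    have x: "x \<in> dom Q A"
      using psurj_memD[OF RA xy] by blast
    show ?thesis
      using g[OF x] xy app_graph_fn[OF fin(1) x] by simp
  qed
  moreover have "graph_fn Q A g \<in> dom Q (Arr A B)"
    using graph_fn_in_dom[OF fin(1)] g by blast
  ultimately have "(graph_fn Q A g, \<psi>) \<in> logrel f Q Q' (Arr A B)"
    using \<psi> by simp
  then show ?thesis
    by blast
qed

lemma psurj_logrel:
  assumes "finite Q" "finite Q'" "psurj Q Q' f"
  shows "psurj (dom Q A) (dom Q' A) (logrel f Q Q' A)"
proof (induction A)
  case Bo
  show ?case
    using psurj_logrel_Bo[OF assms(3)] .
next
  case (Arr A B)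
  have "logrel f Q Q' (Arr A B) \<subseteq> dom Q (Arr A B) \<times> dom Q' (Arr A B)"
    by auto
  moreover have "single_valued (logrel f Q Q' (Arr A B))"
    using single_valued_logrel_Arr[OF Arr.IH(1) psurj_single_valued[OF Arr.IH(2)]] .
  moreover have "dom Q' (Arr A B) \<subseteq> Range (logrel f Q Q' (Arr A B))"
    using logrel_Arr_surj[OF assms Arr.IH] by blast
  ultimately show ?case
    unfolding psurj_def by blast
qed

lemma sem_in_dom:
  assumes "has_ty G t T" "finite Q" "\<forall>i < length G. e ! i \<in> dom Q (G ! i)"
  shows "sem Q t e \<in> dom Q T"
  using assms(1,3)
proof (induction G t T arbitrary: e rule: has_ty.induct)
  case (has_ty_Var i G)
  then show ?case by simp
next
  case (has_ty_App G s T U t)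
  then show ?case
    using app_in_dom by (metis sem.simps(2))
next
  case (has_ty_Lam T G t U)
  have "sem Q t (x # e) \<in> dom Q U" if "x \<in> dom Q T" for x
    using has_ty_Lam.IH[of "x # e"] has_ty_Lam.prems that by (auto simp: nth_Cons split: nat.split)
  then show ?case
    unfolding sem_Lam by (rule graph_fn_in_dom[OF assms(2)])
qed

lemma sem_logrel:
  assumes fin: "finite Q" "finite Q'" and f: "psurj Q Q' f" and "has_ty G t T"
    and "\<forall>i < length G. (e ! i, e' ! i) \<in> logrel f Q Q' (G ! i)"
  shows "(sem Q t e, sem Q' t e') \<in> logrel f Q Q' T"
  using assms(4,5)
proof (induction G t T arbitrary: e e' rule: has_ty.induct)
  case (has_ty_Var i G)
  then show ?case by simp
next
  case (has_ty_App G s T U t)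
  then show ?case by fastforce
next
  case (has_ty_Lam T G t U)
  have R: "x \<in> dom Q V \<and> y \<in> dom Q' V" if "(x, y) \<in> logrel f Q Q' V" for x y V
    using psurj_memD[OF psurj_logrel[OF fin f] that] .
  have "\<forall>i < length G. e ! i \<in> dom Q (G ! i)" "\<forall>i < length G. e' ! i \<in> dom Q' (G ! i)"
    using has_ty_Lam.prems R by blast+
  then have "sem Q (Lam T t) e \<in> dom Q (Arr T U)" "sem Q' (Lam T t) e' \<in> dom Q' (Arr T U)"
    using sem_in_dom[OF has_ty.has_ty_Lam[OF has_ty_Lam.hyps]] fin by blast+
  moreover have "(app (sem Q (Lam T t) e) x, app (sem Q' (Lam T t) e') y) \<in> logrel f Q Q' U"
    if xy: "(x, y) \<in> logrel f Q Q' T" for x y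
  proof -
    have "x \<in> dom Q T" "y \<in> dom Q' T"
      using xy R by blast+
    then have "app (sem Q (Lam T t) e) x = sem Q t (x # e)"
      "app (sem Q' (Lam T t) e') y = sem Q' t (y # e')"
      unfolding sem_Lam using fin by (simp_all add: app_graph_fn)
    moreover have "(sem Q t (x # e), sem Q' t (y # e')) \<in> logrel f Q Q' U"
      using has_ty_Lam.IH[of "x # e" "y # e'"] has_ty_Lam.prems xy
      by (auto simp: nth_Cons split: nat.split)
    ultimately show ?thesis
      by simp
  qed
  ultimately show ?case
    by simp
qed

section \<open>Regular languages\<close>

lemma has_ty_some_rep: "C \<in> Terms A \<Longrightarrow> has_ty [] (SOME t. t \<in> C) A"
proof -
  assume "C \<in> Terms A"
  then obtain a where a: "a \<in> LamRaw A" "C = conv A `` {a}"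
    unfolding Terms_def by (auto elim: quotientE)
  then have "a \<in> C"
    unfolding conv_def by auto
  then have "(SOME t. t \<in> C) \<in> C"
    by (rule someI)
  moreover have "C \<subseteq> LamRaw A"
    using a(2) unfolding conv_def by auto
  ultimately show ?thesis
    unfolding LamRaw_def by auto
qed

lemma interp_in_dom: "finite Q \<Longrightarrow> C \<in> Terms A \<Longrightarrow> interp Q C \<in> dom Q A"
  unfolding interp_def using sem_in_dom[OF has_ty_some_rep] by simp

lemma interp_logrel:
  "finite Q \<Longrightarrow> finite Q' \<Longrightarrow> psurj Q Q' f \<Longrightarrow> C \<in> Terms A
    \<Longrightarrow> (interp Q C, interp Q' C) \<in> logrel f Q Q' A"
  unfolding interp_def using sem_logrel[OF _ _ _ has_ty_some_rep] by simp

lemma RegQ_iff: "X \<in> RegQ Q A \<longleftrightarrow> (\<exists>F \<subseteq> dom Q A. X = {C \<in> Terms A. interp Q C \<in> F})"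
  by (auto simp: RegQ_def)

lemma RegQ_subset_if_psurj:
  fixes Q :: "'a set" and Q' :: "'b set"
  assumes fin: "finite Q" "finite Q'" and f: "psurj Q Q' f"
  shows "RegQ Q' A \<subseteq> RegQ Q A"
proof
  let ?R = "logrel f Q Q' A"
  fix X assume "X \<in> RegQ Q' A"
  then obtain F' where X: "X = {C \<in> Terms A. interp Q' C \<in> F'}"
    unfolding RegQ_iff by blast
  have R: "?R \<subseteq> dom Q A \<times> dom Q' A" "single_valued ?R"
    using psurj_logrel[OF fin f] unfolding psurj_def by blast+
  have "interp Q C \<in> ?R\<inverse> `` F' \<longleftrightarrow> interp Q' C \<in> F'" if "C \<in> Terms A" for C
    using interp_logrel[OF fin f that] R(2) by (auto dest: single_valuedD)
  then have "X = {C \<in> Terms A. interp Q C \<in> ?R\<inverse> `` F'}"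
    using X by auto
  moreover have "?R\<inverse> `` F' \<subseteq> dom Q A"
    using R(1) by auto
  ultimately show "X \<in> RegQ Q A"
    unfolding RegQ_iff by blast
qed

lemma bool_subalg_RegQ:
  assumes fin: "finite Q"
  shows "bool_subalg (Terms A) (RegQ Q A)"
  unfolding bool_subalg_def
proof (intro conjI ballI)
  show "RegQ Q A \<subseteq> Pow (Terms A)"
    by (auto simp: RegQ_def)
  show "{} \<in> RegQ Q A"
    unfolding RegQ_iff by (intro exI[of _ "{}"]) auto
next
  fix X assume "X \<in> RegQ Q A"
  then obtain F where "X = {C \<in> Terms A. interp Q C \<in> F}"
    unfolding RegQ_iff by blast
  then have "Terms A - X = {C \<in> Terms A. interp Q C \<in> dom Q A - F}"
    using interp_in_dom[OF fin] by auto
  then show "Terms A - X \<in> RegQ Q A"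
    unfolding RegQ_iff by blast
next
  fix X Y assume "X \<in> RegQ Q A" "Y \<in> RegQ Q A"
  then obtain F G where F: "F \<subseteq> dom Q A" "X = {C \<in> Terms A. interp Q C \<in> F}"
    and G: "G \<subseteq> dom Q A" "Y = {C \<in> Terms A. interp Q C \<in> G}"
    unfolding RegQ_iff by blast
  then have "X \<union> Y = {C \<in> Terms A. interp Q C \<in> F \<union> G}" "F \<union> G \<subseteq> dom Q A"
    by auto
  then show "X \<union> Y \<in> RegQ Q A"
    unfolding RegQ_iff by blast
qed

lemma directed_bool_subalgs_RegQ:
  "directed_bool_subalgs (Terms A) {Q :: 'q set. finite Q} (\<lambda>Q' Q. \<exists>f. psurj Q Q' f) (\<lambda>Q. RegQ Q A)"
proof
  show "{Q :: 'q set. finite Q} \<noteq> {}"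
    by auto
next
  fix Q :: "'q set" assume "Q \<in> {Q. finite Q}"
  then show "bool_subalg (Terms A) (RegQ Q A)"
    by (simp add: bool_subalg_RegQ)
next
  fix Q' Q :: "'q set" assume "Q' \<in> {Q. finite Q}" "Q \<in> {Q. finite Q}" "\<exists>f. psurj Q Q' f"
  then show "RegQ Q' A \<subseteq> RegQ Q A"
    using RegQ_subset_if_psurj by blast
next
  fix Q1 Q2 :: "'q set" assume "Q1 \<in> {Q. finite Q}" "Q2 \<in> {Q. finite Q}"
  then show "\<exists>Q \<in> {Q :: 'q set. finite Q}. (\<exists>f. psurj Q Q1 f) \<and> (\<exists>f. psurj Q Q2 f)"
    using psurj_directed[of Q1 Q2] by auto
qed

lemma Reg_eq_UN: "Reg A = (\<Union>Q \<in> {Q :: nat set. finite Q}. RegQ Q A)"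
  by (auto simp: Reg_def)

lemma RegQ_subset_Reg: "finite (Q :: nat set) \<Longrightarrow> RegQ Q A \<subseteq> Reg A"
  unfolding Reg_def by blast

lemma bool_subalg_Reg: "bool_subalg (Terms A) (Reg A)"
proof -
  interpret directed_bool_subalgs "Terms A" "{Q :: nat set. finite Q}"
    "\<lambda>Q' Q. \<exists>f. psurj Q Q' f" "\<lambda>Q. RegQ Q A"
    by (rule directed_bool_subalgs_RegQ)
  show ?thesis
    unfolding Reg_eq_UN by (rule bool_subalg_UN)
qed

lemma Reg_colimit:
  fixes g :: "nat set \<Rightarrow> tm set set \<Rightarrow> 'c::boolean_algebra"
  assumes hom: "\<forall>Q. finite Q \<longrightarrow> ba_hom_on (Terms A) (RegQ Q A) (g Q)"
    and compat: "\<forall>Q Q' f. finite Q \<and> finite Q' \<and> psurj Q Q' f \<longrightarrow> (\<forall>X \<in> RegQ Q' A. g Q X = g Q' X)"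
  shows "\<exists>h. ba_hom_on (Terms A) (Reg A) h
    \<and> (\<forall>Q. finite Q \<longrightarrow> (\<forall>X \<in> RegQ Q A. h X = g Q X))
    \<and> (\<forall>h'. ba_hom_on (Terms A) (Reg A) h' \<and> (\<forall>Q. finite Q \<longrightarrow> (\<forall>X \<in> RegQ Q A. h' X = g Q X))
          \<longrightarrow> (\<forall>X \<in> Reg A. h' X = h X))"
proof -
  interpret bool_subalg_cocone "Terms A" "{Q :: nat set. finite Q}"
    "\<lambda>Q' Q. \<exists>f. psurj Q Q' f" "\<lambda>Q. RegQ Q A" g
    by (intro bool_subalg_cocone.intro directed_bool_subalgs_RegQ)
      (unfold bool_subalg_cocone_axioms_def, use hom compat in auto)
  have glue_ext: "\<forall>Q. finite Q \<longrightarrow> (\<forall>X \<in> RegQ Q A. glue X = g Q X)"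
    using glue_eq by simp
  have "h' X = glue X"
    if h'_ext: "\<forall>Q. finite Q \<longrightarrow> (\<forall>X \<in> RegQ Q A. h' X = g Q X)" and X: "X \<in> Reg A" for h' X
  proof -
    obtain Q :: "nat set" where "finite Q" "X \<in> RegQ Q A"
      using X unfolding Reg_eq_UN by blast
    then have "h' X = g Q X" "glue X = g Q X"
      using h'_ext glue_ext by blast+
    then show ?thesis
      by simp
  qed
  moreover have "ba_hom_on (Terms A) (Reg A) glue"
    unfolding Reg_eq_UN by (rule ba_hom_on_glue)
  ultimately show ?thesis
    using glue_ext by blast
qed

theorem theoremA:
  fixes A :: ty
  shows
  "(\<forall>(Q :: 'a set) (Q' :: 'b set) f. finite Q \<and> finite Q' \<and> psurj Q Q' f
        \<longrightarrow> RegQ Q' A \<subseteq> RegQ Q A)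
   \<and> (\<forall>Q :: nat set. finite Q \<longrightarrow> bool_subalg (Terms A) (RegQ Q A))
   \<and> (\<forall>(Q1 :: nat set) (Q2 :: nat set). finite Q1 \<and> finite Q2 \<longrightarrow>
        (\<exists>Q :: nat set. finite Q \<and> (\<exists>f. psurj Q Q1 f) \<and> (\<exists>f. psurj Q Q2 f)))
   \<and> bool_subalg (Terms A) (Reg A)
   \<and> (\<forall>Q :: nat set. finite Q \<longrightarrow> RegQ Q A \<subseteq> Reg A)
   \<and> (\<forall>g :: nat set \<Rightarrow> tm set set \<Rightarrow> 'c::boolean_algebra.
        (\<forall>Q. finite Q \<longrightarrow> ba_hom_on (Terms A) (RegQ Q A) (g Q))
        \<and> (\<forall>Q Q' f. finite Q \<and> finite Q' \<and> psurj Q Q' f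
              \<longrightarrow> (\<forall>X \<in> RegQ Q' A. g Q X = g Q' X))
      \<longrightarrow> (\<exists>h. ba_hom_on (Terms A) (Reg A) h
              \<and> (\<forall>Q. finite Q \<longrightarrow> (\<forall>X \<in> RegQ Q A. h X = g Q X))
              \<and> (\<forall>h'. ba_hom_on (Terms A) (Reg A) h'
                     \<and> (\<forall>Q. finite Q \<longrightarrow> (\<forall>X \<in> RegQ Q A. h' X = g Q X))
                   \<longrightarrow> (\<forall>X \<in> Reg A. h' X = h X))))"
proof (intro conjI allI impI)
  fix Q :: "'a set" and Q' :: "'b set" and f
  assume "finite Q \<and> finite Q' \<and> psurj Q Q' f"
  then show "RegQ Q' A \<subseteq> RegQ Q A"
    using RegQ_subset_if_psurj by blast
next
  fix Q1 Q2 :: "nat set"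
  assume "finite Q1 \<and> finite Q2"
  then show "\<exists>Q :: nat set. finite Q \<and> (\<exists>f. psurj Q Q1 f) \<and> (\<exists>f. psurj Q Q2 f)"
    using psurj_directed[of Q1 Q2] by blast
qed (simp_all add: bool_subalg_RegQ bool_subalg_Reg RegQ_subset_Reg Reg_colimit)

end
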